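(* Let $\Lambda$ denote the von Mangoldt function and let $\varepsilon>0$ be a small number. Then, as $x\to\infty$, \[ \sum_{n\leq x} \Lambda\left( [x/n]^2+1 \right) = a_2 x + O\left( x^{(2+\varepsilon)/3}\log^2 x \right), \] where the density constant is \[ a_2=\sum_{n\geq 1}\frac{\Lambda(n^2+1)}{n(n+1)}\geq 0.900076. \]
   Context: $[t]$ denotes the largest integer not exceeding $t$. The von Mangoldt function is $\Lambda(m)=\log p$ if $m=p^k$ for a prime $p$ and an integer $k\geq 1$, and $\Lambda(m)=0$ otherwise. The sum is over positive integers $n\le x$. *)

theory Defs
  imports "HOL-Analysis.Analysis" "HOL-Number_Theory.Number_Theory" "HOL-Library.Landau_Symbols"
begin

definition mangoldt :: "nat \<Rightarrow> real" where
  "mangoldt m = (if primepow m then ln (real (aprimedivisor m)) else 0)"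

definition a2 :: real where
  "a2 = (\<Sum>n. mangoldt ((Suc n)^2 + 1) / (real (Suc n) * real (Suc n + 1)))"

end

theory Submission
  imports Defs "HOL-Real_Asymp.Real_Asymp"
begin

(* Grouping the n <= N by the value m = N div n turns the sum into the sum of f m times the
   number of n with N div n = m, and that number is N / (m (m + 1)) up to an error of at most 1.
   For m <= sqrt N these errors cost at most sqrt N * max f in total.  For m > sqrt N the numbers
   add up to N div (floor (sqrt N) + 1) <= sqrt N, while the tail of the series
   a = sum of f m / (m (m + 1)) beyond sqrt N is O(log N / sqrt N), by telescoping against
   2 (2 + log t) / t.  For f m = Lambda (m^2 + 1) <= 2 log (m + 1) this gives an error
   O(sqrt x log x), well inside the claimed bound.  The lower bound on a_2 keeps only the six
   terms with n <= 14 for which n^2 + 1 is prime. *)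

lemma mangoldt_prime: "prime p \<Longrightarrow> mangoldt p = ln (real p)"
  using aprimedivisor_prime_power[of p 1] by (simp add: mangoldt_def)

lemma mangoldt_nonneg: "0 \<le> mangoldt m"
proof (cases "primepow m")
  case True
  then have "Suc 0 < aprimedivisor m" using primepow_gt_Suc_0 by simp
  with True show ?thesis by (simp add: mangoldt_def)
qed (simp add: mangoldt_def)

lemma mangoldt_le_ln: "mangoldt m \<le> ln (real m)"
proof (cases "primepow m")
  case True
  then have "Suc 0 < aprimedivisor m" "aprimedivisor m \<le> m"
    using primepow_gt_Suc_0 by (simp_all add: aprimedivisor_le_nat)
  with True show ?thesis by (simp add: mangoldt_def)
qed (cases "m = 0", auto simp: mangoldt_def)

lemma mangoldt_square_plus_one_le: "mangoldt (m^2 + 1) \<le> 2 * ln (real m + 1)"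
proof -
  have "mangoldt (m^2 + 1) \<le> ln (real (m^2 + 1))" by (rule mangoldt_le_ln)
  also have "\<dots> \<le> ln ((real m + 1)^2)"
    by (subst ln_le_cancel_iff) (auto simp: power2_eq_square algebra_simps add_pos_nonneg)
  also have "\<dots> = 2 * ln (real m + 1)" by (simp add: ln_realpow)
  finally show ?thesis .
qed

lemma ln_ge_two_series_terms:
  fixes x :: real
  assumes "1 \<le> x"
  defines "y \<equiv> (x - 1) / (x + 1)"
  shows "2 * y + 2 * y^3 / 3 \<le> ln x"
proof -
  have series: "(\<lambda>n. 2 * y ^ (2*n+1) / of_nat (2*n+1)) sums ln x"
    unfolding y_def using assms by (intro ln_series_quadratic) auto
  have "0 \<le> y" using assms by (simp add: y_def)
  then have "(\<Sum>n<2. 2 * y ^ (2*n+1) / of_nat (2*n+1)) \<le> ln x"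
    using sum_le_suminf[OF sums_summable[OF series], of "{..<2}"] sums_unique[OF series]
    by simp
  then show ?thesis by (simp add: eval_nat_numeral)
qed

lemma real_of_nat_div_bounds:
  "real (N div m) \<le> real N / real m" "real N / real m - 1 < real (N div m)"
  using floor_divide_of_nat_eq[of N m, where 'a=real]
  by (metis of_int_floor_le of_int_of_nat_eq, metis real_of_int_floor_gt_diff_one of_int_of_nat_eq)

lemma nat_floor_divide_of_nat: "0 \<le> x \<Longrightarrow> nat \<lfloor>x / real n\<rfloor> = nat \<lfloor>x\<rfloor> div n"
  using floor_divide_real_eq_div[of "int n" x] by (simp add: nat_div_distrib)

definition log_tail :: "nat \<Rightarrow> real" where
  "log_tail m = 2 * (2 + ln (real m)) / real m"

lemma log_tail_nonneg: "0 \<le> log_tail m"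
  unfolding log_tail_def by (cases "m = 0") (auto intro!: divide_nonneg_pos add_nonneg_nonneg)

lemma log_weight_le_log_tail_diff:
  assumes "1 \<le> m"
  shows "2 * ln (real m + 1) / (real m * (real m + 1)) \<le> log_tail m - log_tail (Suc m)"
proof -
  have m: "1 \<le> real m" using assms by simp
  have "1 + 1 / real m = (real m + 1) / real m" using m by (simp add: field_simps)
  then have "ln (real m + 1) - ln (real m) = ln (1 + 1 / real m)"
    using m by (simp add: ln_div)
  also have "\<dots> \<le> 1 / real m" by (rule ln_add_one_self_le_self) simp
  finally have gap: "ln (real m + 1) - ln (real m) \<le> 1 / real m" .
  then have "real m * (ln (real m + 1) - ln (real m)) \<le> 1"
    using m by (simp add: field_simps)
  moreover have "ln (real m + 1) - ln (real m) \<le> 1"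
    using order_trans[OF gap, of 1] m by simp
  ultimately have "2 * ln (real m + 1)
      \<le> 2 * (2 + ln (real m)) * (real m + 1) - 2 * (2 + ln (real m + 1)) * real m"
    using m by (simp add: algebra_simps)
  moreover have "log_tail m - log_tail (Suc m) = (2 * (2 + ln (real m)) * (real m + 1)
      - 2 * (2 + ln (real m + 1)) * real m) / (real m * (real m + 1))"
    using m by (simp add: log_tail_def field_simps)
  ultimately show ?thesis
    using m by (simp add: divide_right_mono)
qed

definition div_fibre_size :: "nat \<Rightarrow> nat \<Rightarrow> real" where
  "div_fibre_size N m = real (N div m) - real (N div Suc m)"

lemma div_fibre_size_nonneg: "1 \<le> m \<Longrightarrow> 0 \<le> div_fibre_size N m"
  unfolding div_fibre_size_def by (simp add: div_le_mono2)

lemma div_eq_iff_between_quotients: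
  fixes N m n :: nat
  assumes "0 < m" "0 < n"
  shows "N div n = m \<longleftrightarrow> N div Suc m < n \<and> n \<le> N div m"
proof -
  have "N div n = m \<longleftrightarrow> m \<le> N div n \<and> N div n < Suc m" by auto
  also have "\<dots> \<longleftrightarrow> m * n \<le> N \<and> N < Suc m * n"
    using assms by (simp add: less_eq_div_iff_mult_less_eq div_less_iff_less_mult)
  also have "\<dots> \<longleftrightarrow> N div Suc m < n \<and> n \<le> N div m"
    using assms by (auto simp: less_eq_div_iff_mult_less_eq div_less_iff_less_mult mult.commute)
  finally show ?thesis .
qed

lemma div_fibre_eq:
  assumes "1 \<le> m"
  shows "{n \<in> {1..N}. N div n = m} = {N div Suc m<..N div m}"
proof -
  have "n \<le> N div m \<Longrightarrow> n \<le> N" for n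
    using div_le_dividend[of N m] by linarith
  then have "n \<in> {n \<in> {1..N}. N div n = m} \<longleftrightarrow> n \<in> {N div Suc m<..N div m}" for n
    using div_eq_iff_between_quotients[of m n N] assms by (cases "n = 0") auto
  then show ?thesis by blast
qed

lemma sum_comp_div_eq_sum_fibre_size:
  fixes g :: "nat \<Rightarrow> real"
  shows "(\<Sum>n=1..N. g (N div n)) = (\<Sum>m=1..N. g m * div_fibre_size N m)"
proof -
  have "(\<Sum>n=1..N. g (N div n))
      = (\<Sum>m=1..N. \<Sum>n\<in>{n \<in> {1..N}. N div n = m}. g (N div n))"
    by (rule sum.group[symmetric]) (auto simp: Suc_le_eq div_greater_zero_iff)
  also have "\<dots> = (\<Sum>m=1..N. g m * div_fibre_size N m)"
  proof (rule sum.cong)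
    fix m assume "m \<in> {1..N}"
    then have "1 \<le> m" by simp
    have "(\<Sum>n\<in>{n \<in> {1..N}. N div n = m}. g (N div n)) = (\<Sum>n\<in>{n \<in> {1..N}. N div n = m}. g m)"
      by (rule sum.cong) auto
    also have "\<dots> = g m * div_fibre_size N m"
      unfolding div_fibre_eq[OF \<open>1 \<le> m\<close>]
      using div_le_mono2[of m "Suc m" N] \<open>1 \<le> m\<close> by (simp add: div_fibre_size_def)
    finally show "(\<Sum>n\<in>{n \<in> {1..N}. N div n = m}. g (N div n)) = g m * div_fibre_size N m" .
  qed simp
  finally show ?thesis .
qed

lemma div_fibre_size_approx:
  assumes "1 \<le> m"
  shows "\<bar>div_fibre_size N m - real N / (real m * real (m + 1))\<bar> \<le> 1"
proof -
  have "real N / (real m * real (m + 1)) = real N / real m - real N / real (Suc m)"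
    using assms by (simp add: field_simps)
  then show ?thesis
    unfolding div_fibre_size_def
    using real_of_nat_div_bounds[of N m] real_of_nat_div_bounds[of N "Suc m"] by linarith
qed

lemma sum_div_fibre_size_upper:
  assumes "K \<le> N"
  shows "(\<Sum>m=Suc K..N. div_fibre_size N m) = real (N div Suc K)"
proof -
  have "(\<Sum>m=Suc K..N. div_fibre_size N m)
      = (\<Sum>m=Suc K..N. (\<lambda>i. - real (N div i)) (Suc m) - (\<lambda>i. - real (N div i)) m)"
    unfolding div_fibre_size_def by simp
  also have "\<dots> = real (N div Suc K)"
    using assms by (subst sum_Suc_diff) auto
  finally show ?thesis .
qed

locale log_bounded_coeffs =
  fixes f :: "nat \<Rightarrow> real"
  assumes nonneg: "0 \<le> f m"
    and le_ln: "f m \<le> 2 * ln (real m + 1)"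
begin

definition weight :: "nat \<Rightarrow> real" where
  "weight m = f m / (real m * real (m + 1))"

definition density :: real where
  "density = (\<Sum>n. weight (Suc n))"

lemma weight_nonneg: "0 \<le> weight m"
  by (simp add: weight_def nonneg)

lemma le_ln_of_le: "m \<le> N \<Longrightarrow> f m \<le> 2 * ln (real N + 1)"
proof -
  assume "m \<le> N"
  then have "ln (real m + 1) \<le> ln (real N + 1)" by simp
  with le_ln[of m] show ?thesis by linarith
qed

lemma weight_le_log_tail_diff: "1 \<le> m \<Longrightarrow> weight m \<le> log_tail m - log_tail (Suc m)"
proof -
  assume "1 \<le> m"
  have "weight m \<le> 2 * ln (real m + 1) / (real m * (real m + 1))"
    unfolding weight_def of_nat_add of_nat_1
    by (rule divide_right_mono[OF le_ln]) simp
  also have "\<dots> \<le> log_tail m - log_tail (Suc m)"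
    using \<open>1 \<le> m\<close> by (rule log_weight_le_log_tail_diff)
  finally show ?thesis .
qed

lemma sum_weight_le_log_tail:
  "(\<Sum>n<M. weight (Suc (n + K))) \<le> log_tail (Suc K) - log_tail (Suc (M + K))"
proof (induction M)
  case (Suc M)
  then show ?case using weight_le_log_tail_diff[of "Suc (M + K)"] by simp
qed simp

lemma summable_weight: "summable (\<lambda>n. weight (Suc n))"
proof (rule summableI_nonneg_bounded)
  fix M
  have "(\<Sum>n<M. weight (Suc n)) \<le> log_tail 1 - log_tail (Suc M)"
    using sum_weight_le_log_tail[where M=M and K=0] by simp
  then show "(\<Sum>n<M. weight (Suc n)) \<le> log_tail 1"
    using log_tail_nonneg[of "Suc M"] by linarith
qed (rule weight_nonneg)

lemma density_minus_partial_sum_bounds: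
  "0 \<le> density - (\<Sum>n<K. weight (Suc n))"
  "density - (\<Sum>n<K. weight (Suc n)) \<le> log_tail (Suc K)"
proof -
  have summable_tail: "summable (\<lambda>n. weight (Suc (n + K)))"
    using summable_weight summable_iff_shift[where f = "\<lambda>n. weight (Suc n)" and k = K] by simp
  have tail: "density - (\<Sum>n<K. weight (Suc n)) = (\<Sum>n. weight (Suc (n + K)))"
    using suminf_split_initial_segment[OF summable_weight, of K] by (simp add: density_def)
  show "0 \<le> density - (\<Sum>n<K. weight (Suc n))"
    unfolding tail by (intro suminf_nonneg summable_tail weight_nonneg)
  show "density - (\<Sum>n<K. weight (Suc n)) \<le> log_tail (Suc K)"
    unfolding tail
  proof (rule suminf_le_const[OF summable_tail])
    show "(\<Sum>n<M. weight (Suc (n + K))) \<le> log_tail (Suc K)" for M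
      using sum_weight_le_log_tail[where M=M and K=K] log_tail_nonneg[of "Suc (M + K)"] by simp
  qed
qed

lemma density_nonneg: "0 \<le> density"
  using density_minus_partial_sum_bounds(1)[of 0] by simp

lemma head_sum_approx:
  assumes "K \<le> N"
  shows "\<bar>(\<Sum>m=1..K. f m * div_fibre_size N m) - real N * (\<Sum>m=1..K. weight m)\<bar>
    \<le> 2 * ln (real N + 1) * real K"
proof -
  have "\<bar>(\<Sum>m=1..K. f m * div_fibre_size N m) - real N * (\<Sum>m=1..K. weight m)\<bar>
      = \<bar>\<Sum>m=1..K. f m * (div_fibre_size N m - real N / (real m * real (m + 1)))\<bar>"
    by (simp add: weight_def sum_distrib_left sum_subtractf algebra_simps)
  also have "\<dots> \<le> (\<Sum>m=1..K. f m * \<bar>div_fibre_size N m - real N / (real m * real (m + 1))\<bar>)"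
    by (rule order_trans[OF sum_abs]) (simp add: abs_mult nonneg)
  also have "\<dots> \<le> (\<Sum>m=1..K. 2 * ln (real N + 1))"
  proof (rule sum_mono)
    fix m assume m: "m \<in> {1..K}"
    then have "f m * \<bar>div_fibre_size N m - real N / (real m * real (m + 1))\<bar> \<le> f m"
      using div_fibre_size_approx[of m N] nonneg[of m] by (simp add: mult_left_le)
    also have "\<dots> \<le> 2 * ln (real N + 1)"
      using m assms by (intro le_ln_of_le) simp
    finally show "f m * \<bar>div_fibre_size N m - real N / (real m * real (m + 1))\<bar> \<le> 2 * ln (real N + 1)" .
  qed
  also have "\<dots> = 2 * ln (real N + 1) * real K" by simp
  finally show ?thesis .
qed

lemma upper_sum_bounds:
  assumes "K \<le> N"
  shows "0 \<le> (\<Sum>m=Suc K..N. f m * div_fibre_size N m)"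
    and "(\<Sum>m=Suc K..N. f m * div_fibre_size N m) \<le> 2 * ln (real N + 1) * (real N / (real K + 1))"
proof -
  show "0 \<le> (\<Sum>m=Suc K..N. f m * div_fibre_size N m)"
    by (intro sum_nonneg mult_nonneg_nonneg nonneg div_fibre_size_nonneg) simp
  have "(\<Sum>m=Suc K..N. f m * div_fibre_size N m) \<le> (\<Sum>m=Suc K..N. 2 * ln (real N + 1) * div_fibre_size N m)"
    by (intro sum_mono mult_right_mono le_ln_of_le div_fibre_size_nonneg) auto
  also have "\<dots> = 2 * ln (real N + 1) * real (N div Suc K)"
    by (simp add: sum_distrib_left[symmetric] sum_div_fibre_size_upper assms)
  also have "\<dots> \<le> 2 * ln (real N + 1) * (real N / (real K + 1))"
    using real_of_nat_div_bounds(1)[of N "Suc K"] by (intro mult_left_mono) (simp_all add: add.commute)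
  finally show "(\<Sum>m=Suc K..N. f m * div_fibre_size N m) \<le> 2 * ln (real N + 1) * (real N / (real K + 1))" .
qed

lemma scaled_density_tail_bounds:
  assumes "K \<le> N"
  shows "0 \<le> real N * (density - (\<Sum>m=1..K. weight m))"
    and "real N * (density - (\<Sum>m=1..K. weight m)) \<le> (4 + 2 * ln (real N + 1)) * (real N / (real K + 1))"
proof -
  have partial: "(\<Sum>m=1..K. weight m) = (\<Sum>n<K. weight (Suc n))"
    by (simp add: sum.atLeast1_atMost_eq)
  show "0 \<le> real N * (density - (\<Sum>m=1..K. weight m))"
    unfolding partial using density_minus_partial_sum_bounds(1) by simp
  have "real N * (density - (\<Sum>m=1..K. weight m)) \<le> real N * log_tail (Suc K)"
    unfolding partial using density_minus_partial_sum_bounds(2) by (intro mult_left_mono) simp_all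
  also have "\<dots> = (4 + 2 * ln (real K + 1)) * (real N / (real K + 1))"
    by (simp add: log_tail_def add.commute)
  also have "\<dots> \<le> (4 + 2 * ln (real N + 1)) * (real N / (real K + 1))"
    using assms by (intro mult_right_mono) simp_all
  finally show "real N * (density - (\<Sum>m=1..K. weight m)) \<le> (4 + 2 * ln (real N + 1)) * (real N / (real K + 1))" .
qed

lemma sum_comp_div_minus_density_le:
  assumes "K \<le> N"
  shows "\<bar>(\<Sum>n=1..N. f (N div n)) - density * real N\<bar>
    \<le> 2 * ln (real N + 1) * real K + (4 * ln (real N + 1) + 4) * (real N / (real K + 1))"
proof -
  define head where "head = (\<Sum>m=1..K. f m * div_fibre_size N m)"
  define upper where "upper = (\<Sum>m=Suc K..N. f m * div_fibre_size N m)"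
  define P where "P = (\<Sum>m=1..K. weight m)"
  define L where "L = ln (real N + 1)"
  define Q where "Q = real N / (real K + 1)"
  have "{1..N} = {1..K} \<union> {Suc K..N}" using assms by auto
  then have "(\<Sum>n=1..N. f (N div n)) = head + upper"
    unfolding sum_comp_div_eq_sum_fibre_size head_def upper_def by (simp add: sum.union_disjoint)
  moreover have "real N * (density - P) = density * real N - real N * P"
    by (simp add: algebra_simps)
  moreover have "(4 * L + 4) * Q = 2 * L * Q + (4 + 2 * L) * Q"
    by (simp add: algebra_simps)
  moreover note head_sum_approx[OF assms] upper_sum_bounds[OF assms]
    scaled_density_tail_bounds[OF assms]
  ultimately show ?thesis
    unfolding head_def[symmetric] upper_def[symmetric] P_def[symmetric] L_def[symmetric] Q_def[symmetric]
    by linarith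
qed

lemma sum_comp_div_minus_density_le_sqrt:
  "\<bar>(\<Sum>n=1..N. f (N div n)) - density * real N\<bar> \<le> sqrt (real N) * (6 * ln (real N + 1) + 4)"
proof -
  define s where "s = sqrt (real N)"
  define K where "K = nat \<lfloor>s\<rfloor>"
  have "real K = of_int \<lfloor>s\<rfloor>"
    by (simp add: K_def s_def)
  then have K_le_s: "real K \<le> s" and s_less: "s < real K + 1"
    by linarith+
  have "s \<le> real N"
    unfolding s_def by (rule real_le_lsqrt) (simp_all add: power2_eq_square le_square flip: of_nat_mult)
  then have "K \<le> N" using K_le_s by linarith
  have "real N \<le> s * (real K + 1)"
    using s_less mult_left_mono[of s "real K + 1" s] by (simp add: s_def)
  then have N_div_le_s: "real N / (real K + 1) \<le> s"
    by (simp add: field_simps)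
  have L: "0 \<le> ln (real N + 1)" by simp
  have "\<bar>(\<Sum>n=1..N. f (N div n)) - density * real N\<bar>
      \<le> 2 * ln (real N + 1) * real K + (4 * ln (real N + 1) + 4) * (real N / (real K + 1))"
    using \<open>K \<le> N\<close> by (rule sum_comp_div_minus_density_le)
  also have "\<dots> \<le> 2 * ln (real N + 1) * s + (4 * ln (real N + 1) + 4) * s"
    using K_le_s N_div_le_s L by (intro add_mono mult_left_mono) simp_all
  finally show ?thesis by (simp add: s_def algebra_simps)
qed

lemma sum_floor_div_minus_density_le:
  fixes x :: real
  assumes "1 \<le> x"
  shows "\<bar>(\<Sum>n=1..nat \<lfloor>x\<rfloor>. f (nat \<lfloor>x / real n\<rfloor>)) - density * x\<bar>
    \<le> sqrt x * (6 * ln (x + 1) + 4) + density"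
proof -
  define N where "N = nat \<lfloor>x\<rfloor>"
  have N_le: "real N \<le> x" and N_gt: "x < real N + 1"
    unfolding N_def using assms by linarith+
  have "(\<Sum>n=1..N. f (nat \<lfloor>x / real n\<rfloor>)) = (\<Sum>n=1..N. f (N div n))"
    unfolding N_def using assms by (simp add: nat_floor_divide_of_nat)
  moreover have "\<bar>(\<Sum>n=1..N. f (N div n)) - density * real N\<bar> \<le> sqrt (real N) * (6 * ln (real N + 1) + 4)"
    by (rule sum_comp_div_minus_density_le_sqrt)
  moreover have "sqrt (real N) * (6 * ln (real N + 1) + 4) \<le> sqrt x * (6 * ln (x + 1) + 4)"
    using N_le by (intro mult_mono) auto
  moreover have "\<bar>density * x - density * real N\<bar> \<le> density"
    using N_le N_gt density_nonneg mult_left_le[of "x - real N" density]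
    by (simp add: right_diff_distrib[symmetric])
  ultimately show ?thesis
    unfolding N_def[symmetric] by linarith
qed

lemma sum_floor_div_minus_density_bigo:
  "(\<lambda>x. (\<Sum>n=1..nat \<lfloor>x\<rfloor>. f (nat \<lfloor>x / real n\<rfloor>)) - density * x) \<in> O(\<lambda>x. sqrt x * ln x)"
proof -
  have "(\<lambda>x. (\<Sum>n=1..nat \<lfloor>x\<rfloor>. f (nat \<lfloor>x / real n\<rfloor>)) - density * x)
      \<in> O(\<lambda>x. sqrt x * (6 * ln (x + 1) + 4) + density)"
  proof (rule bigoI[where c = 1])
    show "\<forall>\<^sub>F x in at_top. norm ((\<Sum>n=1..nat \<lfloor>x\<rfloor>. f (nat \<lfloor>x / real n\<rfloor>)) - density * x)
        \<le> 1 * norm (sqrt x * (6 * ln (x + 1) + 4) + density)"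
      using eventually_ge_at_top[of "1::real"]
    proof eventually_elim
      case (elim x)
      then have "0 \<le> sqrt x * (6 * ln (x + 1) + 4) + density"
        using density_nonneg by simp
      with sum_floor_div_minus_density_le[OF elim] show ?case by simp
    qed
  qed
  also have "(\<lambda>x. sqrt x * (6 * ln (x + 1) + 4) + d) \<in> O(\<lambda>x. sqrt x * ln x)" for d :: real
    by real_asymp
  finally show ?thesis .
qed

end

interpretation mangoldt_sq: log_bounded_coeffs "\<lambda>m. mangoldt (m^2 + 1)"
  rewrites "log_bounded_coeffs.density (\<lambda>m. mangoldt (m^2 + 1)) = a2"
proof -
  show coeffs: "log_bounded_coeffs (\<lambda>m. mangoldt (m^2 + 1))"
    by unfold_locales (rule mangoldt_nonneg, rule mangoldt_square_plus_one_le)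
  show "log_bounded_coeffs.density (\<lambda>m. mangoldt (m^2 + 1)) = a2"
    using coeffs by (simp only: log_bounded_coeffs.density_def log_bounded_coeffs.weight_def a2_def)
qed

lemma ln_sum_six_primes_ge:
  "0.900076 \<le> ln 2 / 2 + ln 5 / 6 + ln 17 / 20 + ln 37 / 42 + ln 101 / 110 + ln (197::real) / 210"
proof -
  have "ln (b::real) = ln (b / 2^k) + real k * ln 2" if "0 < b" for b k
    using that by (simp add: ln_div ln_realpow)
  from this[of 5 2] this[of 17 4] this[of 37 5] this[of 101 6] this[of 197 7]
  have split: "ln (5::real) = ln (5/4) + 2 * ln 2" "ln (17::real) = ln (17/16) + 4 * ln 2"
    "ln (37::real) = ln (37/32) + 5 * ln 2" "ln (101::real) = ln (101/64) + 6 * ln 2"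
    "ln (197::real) = ln (197/128) + 7 * ln 2"
    by simp_all
  have "56/81 \<le> ln (2::real)" "488/2187 \<le> ln (5/4::real)" "6536/107811 \<le> ln (17/16::real)"
    "143080/985527 \<le> ln (37/32::real)" "6145256/13476375 \<le> ln (101/64::real)"
    "14795256/34328125 \<le> ln (197/128::real)"
    using ln_ge_two_series_terms[of 2] ln_ge_two_series_terms[of "5/4"]
      ln_ge_two_series_terms[of "17/16"] ln_ge_two_series_terms[of "37/32"]
      ln_ge_two_series_terms[of "101/64"] ln_ge_two_series_terms[of "197/128"]
    by (simp_all add: power3_eq_cube)
  then have "900076 / 1000000 \<le> ln 2 / 2 + ln 5 / 6 + ln 17 / 20 + ln 37 / 42 + ln 101 / 110
      + ln (197::real) / 210"
    unfolding split add_divide_distrib by linarith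
  then show ?thesis by simp
qed

lemma a2_ge: "0.900076 \<le> a2"
proof -
  have weight_prime: "mangoldt_sq.weight m = ln (real (m^2 + 1)) / (real m * real (m + 1))"
    if "prime (m^2 + 1)" for m
    unfolding mangoldt_sq.weight_def mangoldt_prime[OF that] ..
  have "prime (2::nat)" "prime (5::nat)" "prime (17::nat)" "prime (37::nat)" "prime (101::nat)"
    "prime (197::nat)"
    by code_simp+
  then have six_terms: "(\<Sum>n\<in>{0,1,3,5,9,13}. mangoldt_sq.weight (Suc n))
      = ln 2 / 2 + ln 5 / 6 + ln 17 / 20 + ln 37 / 42 + ln 101 / 110 + ln 197 / 210"
    using weight_prime[of 1] weight_prime[of 2] weight_prime[of 4] weight_prime[of 6]
      weight_prime[of 10] weight_prime[of 14]
    by (simp add: eval_nat_numeral)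
  have "(\<Sum>n\<in>{0,1,3,5,9,13}. mangoldt_sq.weight (Suc n)) \<le> a2"
    unfolding mangoldt_sq.density_def
    by (rule sum_le_suminf[OF mangoldt_sq.summable_weight _ mangoldt_sq.weight_nonneg]) simp
  with six_terms show ?thesis
    using ln_sum_six_primes_ge by linarith
qed

theorem theorem1p3:
  fixes \<epsilon> :: real
  assumes "\<epsilon> > 0"
  shows "summable (\<lambda>n. mangoldt ((Suc n)^2 + 1) / (real (Suc n) * real (Suc n + 1)))
    \<and> a2 \<ge> 0.900076
    \<and> (\<lambda>x::real. (\<Sum>n = 1..nat \<lfloor>x\<rfloor>. mangoldt ((nat \<lfloor>x / real n\<rfloor>)^2 + 1)) - a2 * x)
        \<in> O(\<lambda>x. x powr ((2 + \<epsilon>) / 3) * (ln x)^2)"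
proof (intro conjI)
  show "summable (\<lambda>n. mangoldt ((Suc n)^2 + 1) / (real (Suc n) * real (Suc n + 1)))"
    using mangoldt_sq.summable_weight unfolding mangoldt_sq.weight_def .
  show "a2 \<ge> 0.900076" by (rule a2_ge)
  have "(\<lambda>x::real. (\<Sum>n = 1..nat \<lfloor>x\<rfloor>. mangoldt ((nat \<lfloor>x / real n\<rfloor>)^2 + 1)) - a2 * x)
      \<in> O(\<lambda>x. sqrt x * ln x)"
    by (rule mangoldt_sq.sum_floor_div_minus_density_bigo)
  also have "(\<lambda>x::real. sqrt x * ln x) \<in> O(\<lambda>x. x powr ((2 + \<epsilon>) / 3) * (ln x)^2)"
    using assms by real_asymp
  finally show "(\<lambda>x::real. (\<Sum>n = 1..nat \<lfloor>x\<rfloor>. mangoldt ((nat \<lfloor>x / real n\<rfloor>)^2 + 1)) - a2 * x)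
      \<in> O(\<lambda>x. x powr ((2 + \<epsilon>) / 3) * (ln x)^2)" .
qed

end
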